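(* Let $u^1_{2n}$ denote the coefficient of $a^2$ in the Taylor expansion $u_{2n}(a)=u^0_{2n}+u^1_{2n}a^2+u^2_{2n}a^4+O(a^6)$ at $a=0$. Then $$u^1_2=-1,\qquad u^1_4=-\frac{15}{16},\qquad u^1_{2n}=-\frac{61}{12^2}\,\frac{(n+1)^2}{2^n}\quad(n\ge3).$$
   Context: The rational functions $u_{2n}(a)$ (which depend on $a$ only through $a^2$) are defined by $(a^2+1)u_2=1$ and, for $n\ge2$, $(a^2+n^2)u_{2n}=3u_{2(n-1)}+3\sum_{j_1+j_2=n-1}u_{2j_1}u_{2j_2}+\sum_{j_1+j_2+j_3=n-1}u_{2j_1}u_{2j_2}u_{2j_3}-\sum_{1\le j_1,\,2j_1<n}(n-2j_1)^2u_{2j_1}u_{2(n-j_1)}$, all indices $j_i\ge1$. *)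

theory Defs
  imports "HOL-Computational_Algebra.Formal_Power_Series"
begin

text \<open>u n is the Taylor (power series) expansion at a = 0 of the rational
  function u_{2n}(a), as a formal power series in the variable a.
  The defining relation (a^2 + n^2) u_{2n} = RHS is solved by multiplying with
  the inverse of the power series a^2 + n^2 (constant term n^2 nonzero).
  u 0 is unused (all indices are at least 1).\<close>

fun u :: "nat \<Rightarrow> real fps" where
  "u 0 = 0"
| "u (Suc 0) = inverse (fps_X ^ 2 + 1)"
| "u (Suc (Suc m)) =
     (let n = Suc (Suc m) in
      inverse (fps_X ^ 2 + fps_const (real (n ^ 2))) *
        (3 * u (n - 1)
         + 3 * (\<Sum>j\<in>{1..n - 2}. u j * u (n - 1 - j))
         + (\<Sum>j1\<in>{1..n - 2}. \<Sum>j2\<in>{1..n - 2 - j1}.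
              if n - 1 - j1 - j2 \<ge> 1 then u j1 * u j2 * u (n - 1 - j1 - j2) else 0)
         - (\<Sum>j\<in>{j. 1 \<le> j \<and> 2 * j < n}. fps_const (real ((n - 2 * j) ^ 2)) * u j * u (n - j))))"

definition u1 :: "nat \<Rightarrow> real" where
  "u1 n = fps_nth (u n) 2"

end

theory Submission
  imports Defs
begin

text \<open>Write u_{2n}(a) = u0 n + u1 n a^2 + O(a^4). The coefficient of a vanishes, so comparing the
  coefficients of a^0 and a^2 in the defining relation yields recurrences n^2 u0 n = \<dots> and
  n^2 u1 n = \<dots> whose right-hand sides only involve earlier terms, built from convolutions of
  the sequences; the sum over 2j < n becomes half of a symmetric convolution with weight (n - 2j)^2.
  Such recurrences have at most one solution with a given first term, so it suffices to check that
  (n + 1) / 2^n, resp. (-61/144 (n + 1)^2 + \<delta> n) / 2^n with \<delta> supported on {1, 2}, satisfy them.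
  The powers of 2 factor out of every convolution, leaving convolutions of polynomial sequences;
  these are summed in closed form by discrete antiderivatives, and the recurrences reduce to
  polynomial identities in n.\<close>

unbundle fps_syntax

section \<open>Convolutions\<close>

text \<open>Sequences are indexed from 1, like the u_{2n}; their values at 0 never enter.\<close>

definition conv :: "(nat \<Rightarrow> 'a::semiring_0) \<Rightarrow> (nat \<Rightarrow> 'a) \<Rightarrow> nat \<Rightarrow> 'a" where
  "conv f g k = (\<Sum>j=1..k-1. f j * g (k - j))"

lemma conv_0 [simp]: "conv f g 0 = 0"
  by (simp add: conv_def)

lemma Abs_fps_conv: "Abs_fps (conv f g) = Abs_fps (f(0 := 0)) * Abs_fps (g(0 := 0))"
proof (rule fps_ext)
  fix k
  have "(\<Sum>j=0..k. (f(0 := 0)) j * (g(0 := 0)) (k - j)) = (\<Sum>j=1..k-1. f j * g (k - j))"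
    by (rule sum.mono_neutral_cong_right) auto
  then show "Abs_fps (conv f g) $ k = (Abs_fps (f(0 := 0)) * Abs_fps (g(0 := 0))) $ k"
    by (simp add: fps_mult_nth conv_def)
qed

lemma conv_commute: "conv f g = conv g (f :: nat \<Rightarrow> 'a::comm_semiring_0)"
proof -
  have "Abs_fps (conv f g) = Abs_fps (conv g f)"
    by (simp add: Abs_fps_conv mult.commute)
  then show ?thesis by (simp add: Abs_fps_inject)
qed

lemma conv_assoc: "conv f (conv g h) = conv (conv f g) h"
proof -
  have upd: "(conv f g)(0 := 0) = conv f g" for f g :: "nat \<Rightarrow> 'a"
    by auto
  have "Abs_fps (conv f (conv g h)) = Abs_fps (conv (conv f g) h)"
    by (simp add: Abs_fps_conv upd mult.assoc)
  then show ?thesis by (simp add: Abs_fps_inject)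
qed

lemma conv_cong:
  assumes "\<And>j. 1 \<le> j \<Longrightarrow> j < k \<Longrightarrow> f j = f' j"
    and "\<And>j. 1 \<le> j \<Longrightarrow> j < k \<Longrightarrow> g j = g' j"
  shows "conv f g k = conv f' g' k"
  unfolding conv_def by (intro sum.cong) (auto simp: assms)

lemma conv_add_right: "conv f (\<lambda>j. g j + h j) k = conv f g k + conv f h k"
  by (simp add: conv_def distrib_left sum.distrib)

lemma conv_mult_right:
  fixes f g :: "nat \<Rightarrow> 'a::comm_semiring_0"
  shows "conv f (\<lambda>j. c * g j) k = c * conv f g k"
  by (simp add: conv_def sum_distrib_left mult.left_commute)

lemma conv_divide_power:
  fixes f g :: "nat \<Rightarrow> 'a::field"
  shows "conv (\<lambda>j. f j / c ^ j) (\<lambda>j. g j / c ^ j) k = conv f g k / c ^ k"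
  unfolding conv_def sum_divide_distrib
proof (intro sum.cong refl)
  fix j assume "j \<in> {1..k-1}"
  then have "j + (k - j) = k"
    by auto
  then have "c ^ k = c ^ j * c ^ (k - j)"
    by (metis power_add)
  then show "f j / c ^ j * (g (k - j) / c ^ (k - j)) = f j * g (k - j) / c ^ k"
    by simp
qed

definition two_point :: "'a \<Rightarrow> 'a \<Rightarrow> nat \<Rightarrow> 'a::zero" where
  "two_point x y j = (if j = 1 then x else if j = 2 then y else 0)"

lemma conv_two_point:
  assumes "k \<ge> 3"
  shows "conv f (two_point x y) k = f (k - 1) * x + f (k - 2) * y"
proof -
  have "conv f (two_point x y) k = (\<Sum>j\<in>{k - 2, k - 1}. f j * two_point x y (k - j))"
    unfolding conv_def
    by (rule sum.mono_neutral_right) (use assms in \<open>auto simp: two_point_def\<close>)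
  also have "\<dots> = f (k - 1) * x + f (k - 2) * y"
    using assms by (simp add: two_point_def numeral_2_eq_2 add.commute)
  finally show ?thesis .
qed

text \<open>The weight is the squared difference of the indices j and n - j; the sum over 2j < n in
  the definition of u is half of such a symmetric sum.\<close>

definition sqdiff_conv :: "(nat \<Rightarrow> real) \<Rightarrow> (nat \<Rightarrow> real) \<Rightarrow> nat \<Rightarrow> real" where
  "sqdiff_conv f g n = (\<Sum>j=1..n-1. (real n - 2 * real j)^2 * f j * g (n - j))"

lemma sqdiff_conv_cong:
  assumes "\<And>j. 1 \<le> j \<Longrightarrow> j < n \<Longrightarrow> f j = f' j"
    and "\<And>j. 1 \<le> j \<Longrightarrow> j < n \<Longrightarrow> g j = g' j"
  shows "sqdiff_conv f g n = sqdiff_conv f' g' n"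
  unfolding sqdiff_conv_def by (intro sum.cong) (auto simp: assms)

lemma sqdiff_conv_add_right:
  "sqdiff_conv f (\<lambda>j. g j + h j) n = sqdiff_conv f g n + sqdiff_conv f h n"
  by (simp add: sqdiff_conv_def distrib_left sum.distrib)

lemma sqdiff_conv_mult_right: "sqdiff_conv f (\<lambda>j. c * g j) n = c * sqdiff_conv f g n"
  by (simp add: sqdiff_conv_def sum_distrib_left mult.left_commute)

lemma sqdiff_conv_divide_power:
  "sqdiff_conv (\<lambda>j. f j / c ^ j) (\<lambda>j. g j / c ^ j) n = sqdiff_conv f g n / c ^ n"
  unfolding sqdiff_conv_def sum_divide_distrib
proof (intro sum.cong refl)
  fix j assume "j \<in> {1..n-1}"
  then have "j + (n - j) = n"
    by auto
  then have "c ^ n = c ^ j * c ^ (n - j)"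
    by (metis power_add)
  then show "(real n - 2 * real j)\<^sup>2 * (f j / c ^ j) * (g (n - j) / c ^ (n - j)) =
      (real n - 2 * real j)\<^sup>2 * f j * g (n - j) / c ^ n"
    by simp
qed

lemma sqdiff_conv_two_point:
  assumes "n \<ge> 3"
  shows "sqdiff_conv f (two_point x y) n =
    (real n - 2)^2 * f (n - 1) * x + (real n - 4)^2 * f (n - 2) * y"
proof -
  have "sqdiff_conv f (two_point x y) n =
      (\<Sum>j\<in>{n - 2, n - 1}. (real n - 2 * real j)^2 * f j * two_point x y (n - j))"
    unfolding sqdiff_conv_def
    by (rule sum.mono_neutral_right) (use assms in \<open>auto simp: two_point_def\<close>)
  also have "\<dots> = (real n - 2)^2 * f (n - 1) * x + (real n - 4)^2 * f (n - 2) * y"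
    using assms by (simp add: two_point_def numeral_2_eq_2 of_nat_diff algebra_simps)
  finally show ?thesis .
qed

lemma sum_lower_half_symmetrize:
  fixes w :: "nat \<Rightarrow> 'a::comm_monoid_add"
  assumes "\<And>j. 2 * j = n \<Longrightarrow> w j = 0"
  shows "(\<Sum>j | 1 \<le> j \<and> 2 * j < n. w j + w (n - j)) = (\<Sum>j=1..n-1. w j)"
proof -
  define L where "L = {j. 1 \<le> j \<and> 2 * j < n}"
  have "(\<Sum>j=1..n-1. w j) = (\<Sum>j\<in>{1..n-1} - L. w j) + (\<Sum>j\<in>L. w j)"
    by (rule sum.subset_diff) (auto simp: L_def)
  also have "(\<Sum>j\<in>{1..n-1} - L. w j) = (\<Sum>j\<in>{j. j < n \<and> n < 2 * j}. w j)"
  proof (rule sum.mono_neutral_right)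
    show "\<forall>j\<in>{1..n-1} - L - {j. j < n \<and> n < 2 * j}. w j = 0"
      using assms by (auto simp: L_def not_less le_less)
  qed (auto simp: L_def)
  also have "\<dots> = (\<Sum>j\<in>L. w (n - j))"
    by (rule sum.reindex_bij_witness[of _ "\<lambda>j. n - j" "\<lambda>j. n - j"]) (auto simp: L_def)
  finally show ?thesis by (simp add: L_def sum.distrib add.commute)
qed

lemma sum_lower_half_sqdiff:
  "(\<Sum>j | 1 \<le> j \<and> 2 * j < n. (real n - 2 * real j)^2 * (f j * g (n - j) + f (n - j) * g j)) =
    sqdiff_conv f g n"
proof -
  define w where "w j = (real n - 2 * real j)^2 * f j * g (n - j)" for j
  have "(\<Sum>j | 1 \<le> j \<and> 2 * j < n. (real n - 2 * real j)^2 * (f j * g (n - j) + f (n - j) * g j)) =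
      (\<Sum>j | 1 \<le> j \<and> 2 * j < n. w j + w (n - j))"
  proof (intro sum.cong refl)
    fix j assume "j \<in> {j. 1 \<le> j \<and> 2 * j < n}"
    then have "(real n - 2 * real (n - j))^2 = (real n - 2 * real j)^2"
      by (simp add: of_nat_diff power2_eq_square algebra_simps)
    then show "(real n - 2 * real j)^2 * (f j * g (n - j) + f (n - j) * g j) = w j + w (n - j)"
      using \<open>j \<in> _\<close> by (simp add: w_def algebra_simps)
  qed
  also have "\<dots> = (\<Sum>j=1..n-1. w j)"
    by (rule sum_lower_half_symmetrize) (auto simp: w_def)
  finally show ?thesis
    by (simp add: w_def sqdiff_conv_def)
qed

section \<open>Convolutions of polynomial sequences\<close>

lemma sum_by_antidifference:
  fixes F f :: "real \<Rightarrow> real"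
  assumes "\<And>x. F (x + 1) = F x + f (x + 1)" and "F 0 = 0"
  shows "(\<Sum>j=1..m. f (real j)) = F (real m)"
proof (induction m)
  case (Suc m)
  then show ?case
    using assms(1)[of "real m"] by (simp add: add.commute)
qed (simp add: assms(2))

text \<open>For polynomials p and q, F N m = (\<Sum>j=1..m. p j * q (N - j)) is a polynomial in N and m;
  it is the ?F of the closed forms below.\<close>

lemma conv_closed_form:
  fixes p q :: "real \<Rightarrow> real" and F :: "real \<Rightarrow> real \<Rightarrow> real"
  assumes "\<And>N x. F N (x + 1) = F N x + p (x + 1) * q (N - (x + 1))"
    and "\<And>N. F N 0 = 0" and "k \<ge> 1"
  shows "conv (\<lambda>j. p (real j)) (\<lambda>j. q (real j)) k = F (real k) (real k - 1)"
proof -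
  have "conv (\<lambda>j. p (real j)) (\<lambda>j. q (real j)) k =
      (\<Sum>j=1..k-1. p (real j) * q (real k - real j))"
    unfolding conv_def by (intro sum.cong refl) (auto simp: of_nat_diff)
  also have "\<dots> = F (real k) (real (k - 1))"
    by (rule sum_by_antidifference) (use assms in auto)
  finally show ?thesis
    using assms(3) by (simp add: of_nat_diff)
qed

lemma sqdiff_conv_closed_form:
  fixes p q :: "real \<Rightarrow> real" and F :: "real \<Rightarrow> real \<Rightarrow> real"
  assumes "\<And>N x. F N (x + 1) = F N x + (N - 2 * (x + 1))^2 * p (x + 1) * q (N - (x + 1))"
    and "\<And>N. F N 0 = 0" and "n \<ge> 1"
  shows "sqdiff_conv (\<lambda>j. p (real j)) (\<lambda>j. q (real j)) n = F (real n) (real n - 1)"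
proof -
  have "sqdiff_conv (\<lambda>j. p (real j)) (\<lambda>j. q (real j)) n =
      (\<Sum>j=1..n-1. (real n - 2 * real j)^2 * p (real j) * q (real n - real j))"
    unfolding sqdiff_conv_def by (intro sum.cong refl) (auto simp: of_nat_diff)
  also have "\<dots> = F (real n) (real (n - 1))"
    by (rule sum_by_antidifference) (use assms in auto)
  finally show ?thesis
    using assms(3) by (simp add: of_nat_diff)
qed

lemma conv_linear_linear:
  assumes "k \<ge> 1"
  shows "conv (\<lambda>j. real j + 1) (\<lambda>j. real j + 1) k =
    (real k - 1) * (real k + 1) * (real k + 6) / 6"
    (is "?lhs = ?rhs")
proof -
  let ?F = "\<lambda>N x::real.
    (- 2*x^3 + 3*N*x^2 - 3*x^2 + 9*N*x + 5*x) / 6"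
  have "?lhs = ?F (real k) (real k - 1)"
    by (rule conv_closed_form) (use assms in \<open>simp_all, algebra\<close>)
  also have "\<dots> = ?rhs"
    by algebra
  finally show ?thesis .
qed

lemma conv_linear_cubic:
  assumes "k \<ge> 1"
  shows "conv (\<lambda>j. real j + 1) (\<lambda>j. (real j - 1) * (real j + 1) * (real j + 6) / 6) k =
    (real k - 2) * (real k - 1) * (real k + 1) * (real k + 5) * (real k + 12) / 120"
    (is "?lhs = ?rhs")
proof -
  let ?F = "\<lambda>N x::real.
    (- 4*x^5 + 15*N*x^4 - 20*N^2*x^3 + 10*N^3*x^2 + 15*x^4 - 30*N*x^3 + 30*N^3*x + 90*x^3
    - 205*N*x^2 + 140*N^2*x + 45*x^2 - 180*N*x - 146*x) / 120"
  have "?lhs = ?F (real k) (real k - 1)"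
    by (rule conv_closed_form) (use assms in \<open>simp_all, algebra\<close>)
  also have "\<dots> = ?rhs"
    by algebra
  finally show ?thesis .
qed

lemma sqdiff_conv_linear_linear:
  assumes "n \<ge> 1"
  shows "sqdiff_conv (\<lambda>j. real j + 1) (\<lambda>j. real j + 1) n =
    real n * (real n - 2) * (real n - 1) * (real n + 1) * (real n + 12) / 30"
    (is "?lhs = ?rhs")
proof -
  let ?F = "\<lambda>N x::real.
    (- 24*x^5 + 60*N*x^4 - 50*N^2*x^3 + 15*N^3*x^2 - 60*x^4 + 160*N*x^3 - 135*N^2*x^2
    + 45*N^3*x + 60*N*x^2 - 55*N^2*x + 60*x^2 - 40*N*x + 24*x) / 30"
  have "?lhs = ?F (real n) (real n - 1)"
    by (rule sqdiff_conv_closed_form) (use assms in \<open>simp_all, algebra\<close>)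
  also have "\<dots> = ?rhs"
    by algebra
  finally show ?thesis .
qed

lemma conv_linear_square:
  assumes "k \<ge> 1"
  shows "conv (\<lambda>j. real j + 1) (\<lambda>j. (real j + 1)^2) k =
    (real k - 1) * (real k + 1) * (real k + 2) * (real k + 6) / 12"
    (is "?lhs = ?rhs")
proof -
  let ?F = "\<lambda>N x::real.
    (3*x^4 - 8*N*x^3 + 6*N^2*x^2 + 2*x^3 - 12*N*x^2 + 18*N^2*x - 9*x^2 + 20*N*x + 4*x) / 12"
  have "?lhs = ?F (real k) (real k - 1)"
    by (rule conv_closed_form) (use assms in \<open>simp_all, algebra\<close>)
  also have "\<dots> = ?rhs"
    by algebra
  finally show ?thesis .
qed

lemma conv_cubic_square:
  assumes "k \<ge> 1"
  shows "conv (\<lambda>j. (real j - 1) * (real j + 1) * (real j + 6) / 6) (\<lambda>j. (real j + 1)^2) k =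
    (real k - 2) * (real k - 1) * (real k + 1) * (real k + 3) * (real k + 5) * (real k + 12) / 360"
    (is "?lhs = ?rhs")
proof -
  let ?F = "\<lambda>N x::real.
    (10*x^6 - 24*N*x^5 + 15*N^2*x^4 + 78*x^5 - 210*N*x^4 + 150*N^2*x^3 - 35*x^4 - 60*N*x^3
    + 165*N^2*x^2 - 240*x^3 + 570*N*x^2 - 330*N^2*x + 205*x^2 - 276*N*x - 18*x) / 360"
  have "?lhs = ?F (real k) (real k - 1)"
    by (rule conv_closed_form) (use assms in \<open>simp_all, algebra\<close>)
  also have "\<dots> = ?rhs"
    by algebra
  finally show ?thesis .
qed

lemma sqdiff_conv_linear_square:
  assumes "n \<ge> 1"
  shows "sqdiff_conv (\<lambda>j. real j + 1) (\<lambda>j. (real j + 1)^2) n =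
    real n * (real n - 2) * (real n - 1) * (real n + 1) * (real n + 2) * (real n + 12) / 60"
    (is "?lhs = ?rhs")
proof -
  let ?F = "\<lambda>N x::real.
    (40*x^6 - 144*N*x^5 + 195*N^2*x^4 - 120*N^3*x^3 + 30*N^4*x^2 + 72*x^5 - 300*N*x^4
    + 450*N^2*x^3 - 300*N^3*x^2 + 90*N^4*x - 80*x^4 + 120*N*x^3 + 15*N^2*x^2 - 60*N^3*x
    - 120*x^3 + 300*N*x^2 - 180*N^2*x + 40*x^2 + 24*N*x + 48*x) / 60"
  have "?lhs = ?F (real n) (real n - 1)"
    by (rule sqdiff_conv_closed_form) (use assms in \<open>simp_all, algebra\<close>)
  also have "\<dots> = ?rhs"
    by algebra
  finally show ?thesis .
qed

section \<open>The coefficient recurrences\<close>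

text \<open>Right-hand sides of the recurrences obtained by comparing the coefficients of a^0 and of a^2
  in the relation defining u_{2n}; in the second one, a stands for the a^0-coefficients.\<close>

definition coeff0_rhs :: "(nat \<Rightarrow> real) \<Rightarrow> nat \<Rightarrow> real" where
  "coeff0_rhs f n =
    3 * f (n - 1) + 3 * conv f f (n - 1) + conv f (conv f f) (n - 1) - sqdiff_conv f f n / 2"

definition coeff2_rhs :: "(nat \<Rightarrow> real) \<Rightarrow> (nat \<Rightarrow> real) \<Rightarrow> nat \<Rightarrow> real" where
  "coeff2_rhs a f n =
    3 * f (n - 1) + 6 * conv a f (n - 1) + 3 * conv (conv a a) f (n - 1) - sqdiff_conv a f n - a n"

lemma coeff0_rhs_cong:
  assumes "n \<ge> 2" and "\<And>j. 1 \<le> j \<Longrightarrow> j < n \<Longrightarrow> f j = g j"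
  shows "coeff0_rhs f n = coeff0_rhs g n"
proof -
  have conv_eq: "conv f f k = conv g g k" if "k < n" for k
    by (rule conv_cong) (use that assms(2) in auto)
  have "conv f (conv f f) (n - 1) = conv g (conv g g) (n - 1)"
    by (rule conv_cong) (use assms(2) conv_eq in auto)
  moreover have "sqdiff_conv f f n = sqdiff_conv g g n"
    by (rule sqdiff_conv_cong) (use assms(2) in auto)
  ultimately show ?thesis
    using assms conv_eq[of "n - 1"] by (simp add: coeff0_rhs_def)
qed

lemma coeff2_rhs_cong:
  assumes "n \<ge> 2" and "\<And>j. 1 \<le> j \<Longrightarrow> j \<le> n \<Longrightarrow> a j = a' j"
    and "\<And>j. 1 \<le> j \<Longrightarrow> j < n \<Longrightarrow> f j = g j"
  shows "coeff2_rhs a f n = coeff2_rhs a' g n"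
proof -
  have conv_aa: "conv a a k = conv a' a' k" if "k < n" for k
    by (rule conv_cong) (use that assms(2) in auto)
  have "conv a f (n - 1) = conv a' g (n - 1)" "conv (conv a a) f (n - 1) = conv (conv a' a') g (n - 1)"
    by (rule conv_cong; use assms(2,3) conv_aa in auto)+
  moreover have "sqdiff_conv a f n = sqdiff_conv a' g n"
    by (rule sqdiff_conv_cong) (use assms(2,3) in auto)
  ultimately show ?thesis
    using assms by (simp add: coeff2_rhs_def)
qed

lemma recurrence_unique:
  fixes f g :: "nat \<Rightarrow> 'a::field_char_0" and \<Phi> :: "nat \<Rightarrow> (nat \<Rightarrow> 'a) \<Rightarrow> 'a"
  assumes rhs_cong: "\<And>n f g. n \<ge> 2 \<Longrightarrow>
      (\<And>j. 1 \<le> j \<Longrightarrow> j < n \<Longrightarrow> f j = g j) \<Longrightarrow> \<Phi> n f = \<Phi> n g"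
    and f_rec: "\<And>n. n \<ge> 2 \<Longrightarrow> of_nat n ^ 2 * f n = \<Phi> n f"
    and g_rec: "\<And>n. n \<ge> 2 \<Longrightarrow> of_nat n ^ 2 * g n = \<Phi> n g"
    and f_1: "f 1 = g 1" and "n \<ge> 1"
  shows "f n = g n"
  using \<open>n \<ge> 1\<close>
proof (induction n rule: less_induct)
  case (less n)
  show ?case
  proof (cases "n = 1")
    case False
    with less.prems have n: "n \<ge> 2"
      by simp
    have "\<Phi> n f = \<Phi> n g"
      by (rule rhs_cong[OF n]) (simp add: less.IH)
    then have "of_nat n ^ 2 * f n = of_nat n ^ 2 * g n"
      using f_rec[OF n] g_rec[OF n] by simp
    then show ?thesis
      using n by simp
  qed (simp only: f_1)
qed

lemma u_recurrence:
  assumes "n \<ge> 2"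
  shows "(fps_X ^ 2 + fps_const (real n ^ 2)) * u n =
    3 * u (n - 1) + 3 * conv u u (n - 1) + conv u (conv u u) (n - 1)
    - (\<Sum>j | 1 \<le> j \<and> 2 * j < n. fps_const ((real n - 2 * real j)^2) * (u j * u (n - j)))"
proof -
  obtain m where n: "n = Suc (Suc m)"
    using assms by (metis add_2_eq_Suc le_Suc_ex)
  have unit: "(fps_X ^ 2 + fps_const (real (n ^ 2)) :: real fps) $ 0 \<noteq> 0"
    using assms by simp
  have pair: "(\<Sum>j\<in>{1..n - 2}. u j * u (n - 1 - j)) = conv u u (n - 1)"
    by (simp add: conv_def diff_diff_left numeral_2_eq_2)
  have triple: "(\<Sum>j1\<in>{1..n - 2}. \<Sum>j2\<in>{1..n - 2 - j1}.
        if n - 1 - j1 - j2 \<ge> 1 then u j1 * u j2 * u (n - 1 - j1 - j2) else 0) =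
      conv u (conv u u) (n - 1)"
    unfolding conv_def sum_distrib_left
    by (intro sum.cong refl) (auto simp: diff_diff_left numeral_2_eq_2 mult.assoc)
  have half:
    "(\<Sum>j\<in>{j. 1 \<le> j \<and> 2 * j < n}. fps_const (real ((n - 2 * j) ^ 2)) * u j * u (n - j)) =
      (\<Sum>j | 1 \<le> j \<and> 2 * j < n. fps_const ((real n - 2 * real j)^2) * (u j * u (n - j)))"
    by (intro sum.cong refl) (auto simp: of_nat_diff mult.assoc)
  have "(fps_X ^ 2 + fps_const (real (n ^ 2))) * u n =
    3 * u (n - 1) + 3 * (\<Sum>j\<in>{1..n - 2}. u j * u (n - 1 - j))
    + (\<Sum>j1\<in>{1..n - 2}. \<Sum>j2\<in>{1..n - 2 - j1}.
        if n - 1 - j1 - j2 \<ge> 1 then u j1 * u j2 * u (n - 1 - j1 - j2) else 0)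
    - (\<Sum>j\<in>{j. 1 \<le> j \<and> 2 * j < n}. fps_const (real ((n - 2 * j) ^ 2)) * u j * u (n - j))"
    unfolding n u.simps Let_def
    by (simp only: mult.assoc[symmetric] inverse_mult_eq_1'[OF unit[unfolded n]] mult_1_left)
  then show ?thesis
    unfolding pair triple half by simp
qed

lemma fps_nth_X2_plus_const_mult:
  "((fps_X ^ 2 + fps_const c) * f) $ i = (if i < 2 then 0 else f $ (i - 2)) + c * f $ i"
  by (simp add: distrib_right fps_X_power_mult_nth)

lemma fps_mult_nth_2_of_nth_1_zero:
  assumes "f $ 1 = 0" "g $ 1 = 0"
  shows "(f * g) $ 2 = f $ 0 * g $ 2 + f $ 2 * (g $ 0 :: 'a::comm_semiring_0)"
  using assms by (simp add: fps_mult_nth numeral_2_eq_2 sum.atLeast0_atMost_Suc)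

lemma conv_fps_nth_0: "conv F G k $ 0 = conv (\<lambda>j. F j $ 0) (\<lambda>j. G j $ 0) k"
  by (simp add: conv_def fps_sum_nth)

lemma conv_fps_nth_1:
  assumes "\<And>j. 1 \<le> j \<Longrightarrow> j < k \<Longrightarrow> F j $ 1 = 0"
    and "\<And>j. 1 \<le> j \<Longrightarrow> j < k \<Longrightarrow> G j $ 1 = (0::'a::comm_semiring_0)"
  shows "conv F G k $ 1 = 0"
  unfolding conv_def fps_sum_nth
proof (intro sum.neutral ballI)
  fix j assume "j \<in> {1..k-1}"
  then have "F j $ 1 = 0" "G (k - j) $ 1 = 0"
    using assms by auto
  then show "(F j * G (k - j)) $ 1 = 0"
    by (simp add: fps_mult_nth_1)
qed

lemma conv_fps_nth_2:
  assumes "\<And>j. 1 \<le> j \<Longrightarrow> j < k \<Longrightarrow> F j $ 1 = 0"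
    and "\<And>j. 1 \<le> j \<Longrightarrow> j < k \<Longrightarrow> G j $ 1 = (0::'a::comm_semiring_0)"
  shows "conv F G k $ 2 =
    conv (\<lambda>j. F j $ 0) (\<lambda>j. G j $ 2) k + conv (\<lambda>j. F j $ 2) (\<lambda>j. G j $ 0) k"
  unfolding conv_def fps_sum_nth sum.distrib[symmetric]
proof (intro sum.cong refl)
  fix j assume "j \<in> {1..k-1}"
  then have "F j $ 1 = 0" "G (k - j) $ 1 = 0"
    using assms by auto
  then show "(F j * G (k - j)) $ 2 = F j $ 0 * G (k - j) $ 2 + F j $ 2 * G (k - j) $ 0"
    by (rule fps_mult_nth_2_of_nth_1_zero)
qed

lemma u_nth_recurrence:
  assumes "n \<ge> 2"
  shows "(if i < 2 then 0 else u n $ (i - 2)) + real n ^ 2 * u n $ i =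
    3 * u (n - 1) $ i + 3 * conv u u (n - 1) $ i + conv u (conv u u) (n - 1) $ i
    - (\<Sum>j | 1 \<le> j \<and> 2 * j < n. (real n - 2 * real j)^2 * (u j * u (n - j)) $ i)"
  using arg_cong[OF u_recurrence[OF assms], of "\<lambda>f. f $ i"]
  unfolding fps_nth_X2_plus_const_mult
  by (simp add: fps_sum_nth numeral_fps_const)

lemma u_1_recurrence: "(fps_X ^ 2 + fps_const 1) * u 1 = 1"
  by (simp add: inverse_mult_eq_1')

lemma u_nth_1 [simp]: "u n $ 1 = 0"
proof (induction n rule: less_induct)
  case (less n)
  consider "n = 0" | "n = 1" | "n \<ge> 2"
    by linarith
  then show ?case
  proof cases
    case 2
    show ?thesis
      using arg_cong[OF u_1_recurrence, of "\<lambda>f. f $ 1"]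
      unfolding fps_nth_X2_plus_const_mult 2 by simp
  next
    case 3
    have IH: "u j $ 1 = 0" if "j < n" for j
      using less.IH that .
    have conv_uu: "conv u u k $ 1 = 0" if "k < n" for k
      by (rule conv_fps_nth_1) (use that IH in auto)
    have conv_uuu: "conv u (conv u u) (n - 1) $ 1 = 0"
      by (rule conv_fps_nth_1) (use IH conv_uu in auto)
    have half: "(real n - 2 * real j)^2 * (u j * u (n - j)) $ 1 = 0" if "1 \<le> j" "2 * j < n" for j
      using that IH[of j] IH[of "n - j"] by (simp add: fps_mult_nth_1)
    have "real n ^ 2 * u n $ 1 = 0"
      using u_nth_recurrence[OF 3, of 1] 3 IH[of "n - 1"] conv_uu[of "n - 1"] conv_uuu half
      by simp
    then show ?thesis
      using 3 by simp
  qed simp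
qed

definition u0 :: "nat \<Rightarrow> real" where
  "u0 n = u n $ 0"

lemma u0_1: "u0 1 = 1"
  using arg_cong[OF u_1_recurrence, of "\<lambda>f. f $ 0"]
  unfolding fps_nth_X2_plus_const_mult u0_def by simp

lemma u1_1: "u1 1 = -1"
  using arg_cong[OF u_1_recurrence, of "\<lambda>f. f $ 2"] u0_1
  unfolding fps_nth_X2_plus_const_mult u0_def u1_def by simp

lemma u0_recurrence:
  assumes "n \<ge> 2"
  shows "real n ^ 2 * u0 n = coeff0_rhs u0 n"
proof -
  have half: "(\<Sum>j | 1 \<le> j \<and> 2 * j < n. (real n - 2 * real j)^2 * (u j * u (n - j)) $ 0) =
      sqdiff_conv u0 u0 n / 2"
    unfolding sum_lower_half_sqdiff[of n u0 u0, symmetric] sum_divide_distrib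
    by (intro sum.cong refl) (simp add: u0_def)
  show ?thesis
    using u_nth_recurrence[OF assms, of 0] assms
    unfolding half coeff0_rhs_def conv_fps_nth_0 by (simp add: u0_def[abs_def])
qed

lemma u1_recurrence:
  assumes "n \<ge> 2"
  shows "real n ^ 2 * u1 n = coeff2_rhs u0 u1 n"
proof -
  have half: "(\<Sum>j | 1 \<le> j \<and> 2 * j < n. (real n - 2 * real j)^2 * (u j * u (n - j)) $ 2) =
      sqdiff_conv u0 u1 n"
    unfolding sum_lower_half_sqdiff[of n u0 u1, symmetric]
    by (intro sum.cong refl)
      (simp add: u0_def u1_def fps_mult_nth_2_of_nth_1_zero[OF u_nth_1 u_nth_1] mult.commute)
  have pair: "conv u u k $ 2 = conv u0 u1 k + conv u1 u0 k" for k
    by (simp add: conv_fps_nth_2[OF u_nth_1 u_nth_1] u0_def[abs_def] u1_def[abs_def])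
  have triple: "conv u (conv u u) k $ 2 = 3 * conv (conv u0 u0) u1 k" for k
  proof -
    have "conv u (conv u u) k $ 2 =
        conv u0 (\<lambda>j. conv u0 u1 j + conv u1 u0 j) k + conv u1 (conv u0 u0) k"
      by (simp add: conv_fps_nth_2[OF u_nth_1 conv_fps_nth_1[OF u_nth_1 u_nth_1]] pair
          conv_fps_nth_0 u0_def[abs_def] u1_def[abs_def])
    also have "\<dots> = 3 * conv (conv u0 u0) u1 k"
    proof -
      have "conv u0 (conv u0 u1) = conv (conv u0 u0) u1"
        by (rule conv_assoc)
      moreover have "conv u0 (conv u1 u0) = conv (conv u0 u0) u1"
        by (simp only: conv_commute[of u1 u0] conv_assoc)
      moreover have "conv u1 (conv u0 u0) = conv (conv u0 u0) u1"
        by (rule conv_commute)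
      ultimately show ?thesis
        by (simp add: conv_add_right)
    qed
    finally show ?thesis .
  qed
  show ?thesis
    using u_nth_recurrence[OF assms, of 2] assms
    unfolding half pair triple coeff2_rhs_def
    by (simp add: u0_def u1_def conv_commute[of u1 u0])
qed

section \<open>The closed forms\<close>

lemma divide_power_two_pred:
  assumes "n \<ge> 1"
  shows "x / 2 ^ (n - 1) = 2 * x / (2::real) ^ n"
proof -
  have "(2::real) ^ n = 2 * 2 ^ (n - 1)"
    using assms by (metis power_Suc Suc_diff_1 less_le_trans zero_less_one)
  then show ?thesis
    by simp
qed

lemma coeff0_rhs_divide_power_2:
  assumes "n \<ge> 1"
  shows "coeff0_rhs (\<lambda>j. f j / 2 ^ j) n =
    (2 * (3 * f (n - 1) + 3 * conv f f (n - 1) + conv f (conv f f) (n - 1))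
      - sqdiff_conv f f n / 2) / 2 ^ n"
proof -
  have conv_ff: "conv (\<lambda>j. f j / 2 ^ j) (\<lambda>j. f j / 2 ^ j) = (\<lambda>k. conv f f k / 2 ^ k)"
    by (rule ext) (rule conv_divide_power)
  show ?thesis
    unfolding coeff0_rhs_def conv_ff conv_divide_power sqdiff_conv_divide_power
      divide_power_two_pred[OF assms]
    by (simp add: field_simps)
qed

lemma coeff2_rhs_divide_power_2:
  assumes "n \<ge> 1"
  shows "coeff2_rhs (\<lambda>j. a j / 2 ^ j) (\<lambda>j. f j / 2 ^ j) n =
    (2 * (3 * f (n - 1) + 6 * conv a f (n - 1) + 3 * conv (conv a a) f (n - 1))
      - sqdiff_conv a f n - a n) / 2 ^ n"
proof -
  have conv_aa: "conv (\<lambda>j. a j / 2 ^ j) (\<lambda>j. a j / 2 ^ j) = (\<lambda>k. conv a a k / 2 ^ k)"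
    by (rule ext) (rule conv_divide_power)
  show ?thesis
    unfolding coeff2_rhs_def conv_aa conv_divide_power sqdiff_conv_divide_power
      divide_power_two_pred[OF assms]
    by (simp add: field_simps)
qed

lemma coeff0_rhs_closed_form:
  assumes "n \<ge> 2"
  shows "coeff0_rhs (\<lambda>j. (real j + 1) / 2 ^ j) n = real n ^ 2 * ((real n + 1) / 2 ^ n)"
proof -
  obtain m where n: "n = Suc m" and m: "m \<ge> 1"
    using assms by (metis Suc_le_D Suc_le_mono one_add_one plus_1_eq_Suc)
  let ?a = "\<lambda>j. real j + 1"
  have "conv ?a (conv ?a ?a) m = conv ?a (\<lambda>j. (real j - 1) * (real j + 1) * (real j + 6) / 6) m"
    by (rule conv_cong) (simp_all add: conv_linear_linear)
  also have "\<dots> = (real m - 2) * (real m - 1) * (real m + 1) * (real m + 5) * (real m + 12) / 120"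
    by (rule conv_linear_cubic[OF m])
  finally have
    "2 * (3 * ?a m + 3 * conv ?a ?a m + conv ?a (conv ?a ?a) m) - sqdiff_conv ?a ?a (Suc m) / 2 =
      real (Suc m) ^ 2 * ?a (Suc m)"
    unfolding conv_linear_linear[OF m] sqdiff_conv_linear_linear[OF le_SucI[OF m]]
    by (simp add: field_simps) algebra
  then show ?thesis
    unfolding coeff0_rhs_divide_power_2[OF le_SucI[OF m], unfolded n] n diff_Suc_1 by simp
qed

lemma u0_eq: "n \<ge> 1 \<Longrightarrow> u0 n = (real n + 1) / 2 ^ n"
proof (rule recurrence_unique[where \<Phi> = "\<lambda>n f. coeff0_rhs f n"])
  show "coeff0_rhs f n = coeff0_rhs g n"
    if "n \<ge> 2" "\<And>j. 1 \<le> j \<Longrightarrow> j < n \<Longrightarrow> f j = g j" for n f g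
    using that by (rule coeff0_rhs_cong)
qed (simp_all add: u0_recurrence coeff0_rhs_closed_form u0_1[unfolded One_nat_def])

text \<open>The values 2^n u1 n. Their pattern (n + 1)^2 breaks down at n = 1, 2; the correction there
  enters the recurrence for every n through the convolutions.\<close>

definition scaled_u1 :: "nat \<Rightarrow> real" where
  "scaled_u1 j = - 61/144 * (real j + 1)^2 + two_point (- 11/36) (1/16) j"

lemma scaled_u1_recurrence:
  assumes n: "n \<ge> 2"
  shows "2 * (3 * scaled_u1 (n - 1) + 6 * conv (\<lambda>j. real j + 1) scaled_u1 (n - 1)
      + 3 * conv (conv (\<lambda>j. real j + 1) (\<lambda>j. real j + 1)) scaled_u1 (n - 1))
    - sqdiff_conv (\<lambda>j. real j + 1) scaled_u1 n - (real n + 1) = real n ^ 2 * scaled_u1 n"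
proof -
  consider "n = 2" | "n = 3" | "n = 4" | "n \<ge> 5"
    using n by linarith
  then show ?thesis
  proof cases
    case 4
    define m where "m = n - 5"
    have n_eq: "n = m + 5" and k: "n - 1 = m + 4" and pos: "m + 4 \<ge> 1" "m + 5 \<ge> 1"
      using 4 by (simp_all add: m_def)
    let ?A = "\<lambda>j. real j + 1" and ?S = "\<lambda>j. (real j + 1)^2"
    let ?C = "\<lambda>j. (real j - 1) * (real j + 1) * (real j + 6) / 6"
    note split = scaled_u1_def[abs_def] conv_add_right[of _ "\<lambda>j. - 61/144 * ?S j"]
      sqdiff_conv_add_right[of _ "\<lambda>j. - 61/144 * ?S j"] conv_mult_right sqdiff_conv_mult_right
    have conv_A: "conv ?A scaled_u1 (m + 4) =
        - 61/144 * conv ?A ?S (m + 4) + ?A (m + 3) * (- 11/36) + ?A (m + 2) * (1/16)"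
      unfolding split by (simp add: conv_two_point eval_nat_numeral)
    have "conv (conv ?A ?A) ?S (m + 4) = conv ?C ?S (m + 4)"
      by (rule conv_cong) (simp_all add: conv_linear_linear)
    then have conv_AA: "conv (conv ?A ?A) scaled_u1 (m + 4) =
        - 61/144 * conv ?C ?S (m + 4) + ?C (m + 3) * (- 11/36) + ?C (m + 2) * (1/16)"
      unfolding split by (simp add: conv_two_point conv_linear_linear eval_nat_numeral)
    have sqdiff_A: "sqdiff_conv ?A scaled_u1 (m + 5) = - 61/144 * sqdiff_conv ?A ?S (m + 5)
        + (real m + 3)^2 * ?A (m + 4) * (- 11/36) + (real m + 1)^2 * ?A (m + 3) * (1/16)"
      unfolding split by (simp add: sqdiff_conv_two_point eval_nat_numeral add.commute)
    show ?thesis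
      unfolding k unfolding n_eq conv_A conv_AA sqdiff_A conv_linear_square[OF pos(1)]
        conv_cubic_square[OF pos(1)] sqdiff_conv_linear_square[OF pos(2)]
      by (simp add: scaled_u1_def two_point_def field_simps) algebra
  qed (simp_all add: scaled_u1_def conv_def sqdiff_conv_def two_point_def eval_nat_numeral)
qed

lemma coeff2_rhs_closed_form:
  assumes "n \<ge> 2"
  shows "coeff2_rhs (\<lambda>j. (real j + 1) / 2 ^ j) (\<lambda>j. scaled_u1 j / 2 ^ j) n =
    real n ^ 2 * (scaled_u1 n / 2 ^ n)"
  using scaled_u1_recurrence[OF assms] assms
  by (simp add: coeff2_rhs_divide_power_2)

lemma u1_eq: "n \<ge> 1 \<Longrightarrow> u1 n = scaled_u1 n / 2 ^ n"
proof (rule recurrence_unique[where \<Phi> = "\<lambda>n f. coeff2_rhs u0 f n"])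
  show "coeff2_rhs u0 f n = coeff2_rhs u0 g n"
    if "n \<ge> 2" "\<And>j. 1 \<le> j \<Longrightarrow> j < n \<Longrightarrow> f j = g j" for n f g
    using that by (intro coeff2_rhs_cong) auto
  show "real n ^ 2 * (scaled_u1 n / 2 ^ n) = coeff2_rhs u0 (\<lambda>n. scaled_u1 n / 2 ^ n) n"
    if "n \<ge> 2" for n
    using coeff2_rhs_closed_form[OF that]
      coeff2_rhs_cong[OF that, of u0 "\<lambda>j. (real j + 1) / 2 ^ j"]
    by (simp add: u0_eq)
qed (simp_all add: u1_recurrence u1_1[unfolded One_nat_def] scaled_u1_def two_point_def)

theorem proposition11:
  shows "u1 1 = -1 \<and> u1 2 = -15/16 \<and>
         (\<forall>n\<ge>3. u1 n = - (61 / 12^2) * (real (n + 1))^2 / 2^n)"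
proof (intro conjI allI impI)
  show "u1 1 = -1"
    by (rule u1_1)
  show "u1 2 = -15/16"
    using u1_eq[of 2] by (simp add: scaled_u1_def two_point_def)
  show "u1 n = - (61 / 12^2) * (real (n + 1))^2 / 2^n" if "n \<ge> 3" for n
    using u1_eq[of n] that by (simp add: scaled_u1_def two_point_def add.commute)
qed

end
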